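(* Let $\Omega\subset\mathbb{R}^N$ be a bounded open Lipschitz set and $\alpha\in(0,1)$. For $u\in C^\alpha(\overline\Omega)$ we have $$(-\Delta)^s_\Omega u=s\,L^\Omega_\Delta u+o(s)\qquad\text{in }L^\infty(\Omega)\text{ as }s\to0^+,$$ where $$[L^\Omega_\Delta u](x)=c_N\int_\Omega\frac{u(x)-u(y)}{|x-y|^N}\,dy,\quad x\in\Omega,\qquad c_N=\pi^{-N/2}\Gamma(\tfrac N2).$$ Moreover, this expansion is uniform for $u$ in bounded subsets of $C^\alpha(\overline\Omega)$.
   Context: A bounded open set $\Omega\subset\mathbb{R}^N$ is called a Lipschitz set if every point of $\partial\Omega$ has an open neighborhood in which $\partial\Omega$ is, after a suitable rotation, the graph of a Lipschitz function. For $s\in(0,1)$ and $u$ defined on $\Omega$, the regional fractional Laplacian is $(-\Delta)^s_\Omega u(x)=c_{N,s}\lim_{\varepsilon\to0^+}\int_{\Omega\setminus B_\varepsilon(x)}\frac{u(x)-u(y)}{|x-y|^{N+2s}}dy$ for $x\in\Omega$, with $c_{N,s}=\frac{s4^s\Gamma(\frac{N+2s}{2})}{\pi^{N/2}\Gamma(1-s)}$. $C^\alpha(\overline\Omega)$ is the space of $\alpha$-Hölder continuous functions on $\overline\Omega$ with its usual norm $\|u\|_{L^\infty}+\sup_{x\ne y}\frac{|u(x)-u(y)|}{|x-y|^\alpha}$. *)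

theory Defs
  imports "HOL-Analysis.Analysis"
begin

text \<open>Bounded open Lipschitz set: every boundary point has an open neighbourhood U in which
  the boundary is, after a rotation, the graph of a Lipschitz function. The rotation is encoded
  by the unit vector e (the image of the last coordinate direction); the graph is taken over the
  hyperplane orthogonal to e.\<close>
definition lipschitz_set :: "'a::euclidean_space set \<Rightarrow> bool" where
  "lipschitz_set \<Omega> \<longleftrightarrow> bounded \<Omega> \<and> open \<Omega> \<and>
     (\<forall>p\<in>frontier \<Omega>. \<exists>U e g L. open U \<and> p \<in> U \<and> norm e = 1 \<and>
        L-lipschitz_on {y. y \<bullet> e = 0} g \<and>
        frontier \<Omega> \<inter> U = {y + g y *\<^sub>R e | y. y \<bullet> e = 0} \<inter> U)"

definition holder_space :: "real \<Rightarrow> 'a::euclidean_space set \<Rightarrow> ('a \<Rightarrow> real) set" where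
  "holder_space \<alpha> \<Omega> = {u. bounded (u ` closure \<Omega>) \<and>
     (\<exists>C. \<forall>x\<in>closure \<Omega>. \<forall>y\<in>closure \<Omega>. \<bar>u x - u y\<bar> \<le> C * dist x y powr \<alpha>)}"

definition holder_norm :: "real \<Rightarrow> 'a::euclidean_space set \<Rightarrow> ('a \<Rightarrow> real) \<Rightarrow> real" where
  "holder_norm \<alpha> \<Omega> u = (SUP x\<in>closure \<Omega>. \<bar>u x\<bar>) +
     (SUP xy\<in>{(x,y). x \<in> closure \<Omega> \<and> y \<in> closure \<Omega> \<and> x \<noteq> y}.
        \<bar>u (fst xy) - u (snd xy)\<bar> / dist (fst xy) (snd xy) powr \<alpha>)"

definition c_Ns :: "nat \<Rightarrow> real \<Rightarrow> real" where
  "c_Ns N s = s * 4 powr s * Gamma ((real N + 2 * s) / 2) / (pi powr (real N / 2) * Gamma (1 - s))"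

definition c_N :: "nat \<Rightarrow> real" where
  "c_N N = Gamma (real N / 2) / pi powr (real N / 2)"

definition regional_frac_lap :: "real \<Rightarrow> 'a::euclidean_space set \<Rightarrow> ('a \<Rightarrow> real) \<Rightarrow> 'a \<Rightarrow> real" where
  "regional_frac_lap s \<Omega> u x = c_Ns DIM('a) s *
     Lim (at_right 0) (\<lambda>\<epsilon>. LINT y:(\<Omega> - ball x \<epsilon>)|lborel.
        (u x - u y) / norm (x - y) powr (real DIM('a) + 2 * s))"

definition L_Delta :: "'a::euclidean_space set \<Rightarrow> ('a \<Rightarrow> real) \<Rightarrow> 'a \<Rightarrow> real" where
  "L_Delta \<Omega> u x = c_N DIM('a) *
     (LINT y:\<Omega>|lborel. (u x - u y) / norm (x - y) powr real DIM('a))"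

end

theory Submission
  imports Defs "HOL-Real_Asymp.Real_Asymp"
begin

text \<open>
  Fix \<open>x \<in> \<Omega>\<close>, let \<open>D = diam \<Omega> + 1\<close> and let \<open>M\<close> bound the Hoelder norm of \<open>u\<close>, so that
  \<open>|u x - u y| \<le> M |x - y|\<^sup>\<alpha>\<close>. For \<open>2s < \<alpha>\<close> the kernel \<open>(u x - u y) / |x - y|\<^bsup>N+2s\<^esup>\<close> is then
  absolutely integrable on \<open>\<Omega>\<close>, so the principal value is an ordinary integral \<open>I\<^sub>s\<close>; writing
  \<open>c\<^sub>N\<^sub>,\<^sub>s = s a(s)\<close> with \<open>a(s) \<rightarrow> c\<^sub>N\<close>, the error is \<open>s ((a(s) - c\<^sub>N) I\<^sub>s + c\<^sub>N (I\<^sub>s - I\<^sub>0))\<close>.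
  The kernels of \<open>I\<^sub>s\<close> and \<open>I\<^sub>0\<close> differ by at most \<open>M r\<^bsup>\<alpha>-N\<^esup> |r\<^bsup>-2s\<^esup> - 1|\<close>, \<open>r = |x - y| < D\<close>.
  For \<open>r < \<rho> \<le> 1\<close> and \<open>4s \<le> \<alpha>\<close> this is at most \<open>M r\<^bsup>\<alpha>/2-N\<^esup>\<close>, whose integral is
  \<open>O(\<rho>\<^bsup>\<alpha>/2\<^esup>)\<close>; for \<open>\<rho> \<le> r < D\<close> the factor \<open>|r\<^bsup>-2s\<^esup> - 1|\<close> is at most
  \<open>max (\<rho>\<^bsup>-2s\<^esup> - 1) (1 - D\<^bsup>-2s\<^esup>)\<close>. With \<open>\<rho> = s\<close> everything tends to \<open>0\<close> as \<open>s \<rightarrow> 0\<close>, and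
  all bounds depend on \<open>u\<close> only through \<open>M\<close>.
\<close>

section \<open>Integrals of \<open>|x - y|\<^bsup>-\<beta>\<^esup>\<close> over balls\<close>

lemma exists_dyadic_shell:
  fixes r R :: real
  assumes "0 < r" "r < R"
  shows "\<exists>k::nat. R / 2^(k+1) \<le> r \<and> r < R / 2^k"
proof -
  obtain n :: nat where "R / r < 2^n"
    using real_arch_pow[of 2 "R / r"] by auto
  then have ex: "\<exists>n::nat. R / 2^n \<le> r"
    using assms by (auto simp: field_simps intro!: exI[of _ n])
  define m where "m = (LEAST n::nat. R / 2^n \<le> r)"
  have m: "R / 2^m \<le> r"
    unfolding m_def by (rule LeastI_ex[OF ex])
  then obtain k where k: "m = Suc k"
    using assms by (cases m) auto
  have "\<not> R / 2^k \<le> r"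
    using not_less_Least[of k "\<lambda>n. R / 2^n \<le> r"] k unfolding m_def by auto
  then show ?thesis
    using m k by (intro exI[of _ k]) auto
qed

lemma ball_powr_le_dyadic_sum:
  fixes x :: "'a::real_normed_vector" and \<beta> R :: real
  assumes "0 \<le> \<beta>"
  shows "ennreal (indicator (ball x R) y * norm (x - y) powr (-\<beta>))
      \<le> (\<Sum>k. ennreal ((R / 2^(k+1)) powr (-\<beta>)) * indicator (ball x (R / 2^k)) y)"
proof (cases "y \<in> ball x R \<and> y \<noteq> x")
  case True
  then obtain k where k: "R / 2^(k+1) \<le> norm (x - y)" "norm (x - y) < R / 2^k"
    using exists_dyadic_shell[of "norm (x - y)" R] by (auto simp: dist_norm)
  have "norm (x - y) powr (-\<beta>) \<le> (R / 2^(k+1)) powr (-\<beta>)"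
    using k assms True by (intro powr_mono2') (auto simp: dist_norm)
  then have "ennreal (indicator (ball x R) y * norm (x - y) powr (-\<beta>))
      \<le> ennreal ((R / 2^(k+1)) powr (-\<beta>)) * indicator (ball x (R / 2^k)) y"
    using True k by (auto simp: dist_norm intro: ennreal_leI)
  also have "\<dots> \<le> (\<Sum>k. ennreal ((R / 2^(k+1)) powr (-\<beta>)) * indicator (ball x (R / 2^k)) y)"
    using sum_le_suminf[OF summableI, of "{k}"] by simp
  finally show ?thesis .
qed (auto simp: indicator_def)

text \<open>The constant produced by summing the dyadic bound; the sharp one,
  \<open>N \<omega>\<^sub>N / (N - \<beta>)\<close>, would need polar coordinates.\<close>

definition ball_kernel_bound :: "nat \<Rightarrow> real \<Rightarrow> real" where
  "ball_kernel_bound N \<beta> = unit_ball_vol N * 2 powr \<beta> / (1 - 2 powr (\<beta> - N))"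

lemma ball_kernel_bound_pos: "\<beta> < real N \<Longrightarrow> 0 < ball_kernel_bound N \<beta>"
  unfolding ball_kernel_bound_def
  by (intro divide_pos_pos mult_pos_pos unit_ball_vol_pos) (auto intro: powr_less_one)

lemma nn_integral_ball_powr_le:
  fixes x :: "'a::euclidean_space" and \<beta> R :: real
  assumes "0 \<le> \<beta>" "\<beta> < DIM('a)" "0 < R"
  shows "(\<integral>\<^sup>+ y. ennreal (indicator (ball x R) y * norm (x - y) powr (-\<beta>)) \<partial>lborel)
      \<le> ennreal (ball_kernel_bound DIM('a) \<beta> * R powr (DIM('a) - \<beta>))"
proof -
  define N where "N = DIM('a)"
  define c where "c k = (R / 2^(k+1)) powr (-\<beta>)" for k :: nat
  define q where "q = (2::real) powr (\<beta> - N)"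
  have q: "0 \<le> q" "q < 1"
    unfolding q_def N_def using assms(2) by (auto intro!: powr_less_one)
  have "(\<integral>\<^sup>+ y. ennreal (indicator (ball x R) y * norm (x - y) powr (-\<beta>)) \<partial>lborel)
     \<le> (\<integral>\<^sup>+ y. (\<Sum>k. ennreal (c k) * indicator (ball x (R / 2^k)) y) \<partial>lborel)"
    unfolding c_def using assms(1) by (intro nn_integral_mono ball_powr_le_dyadic_sum)
  also have "\<dots> = (\<Sum>k. \<integral>\<^sup>+ y. ennreal (c k) * indicator (ball x (R / 2^k)) y \<partial>lborel)"
    by (intro nn_integral_suminf) (measurable, auto simp: pred_def)
  also have "\<dots> = (\<Sum>k. ennreal (c k * (unit_ball_vol N * (R / 2^k)^N)))"
    using assms(3) by (subst nn_integral_cmult_indicator)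
      (auto simp: c_def emeasure_ball N_def ennreal_mult)
  also have "\<dots> = (\<Sum>k. ennreal (unit_ball_vol N * 2 powr \<beta> * R powr (N - \<beta>) * q^k))"
    using assms(3) by (simp add: c_def q_def powr_divide powr_minus_divide powr_diff powr_add
        powr_powr powr_mult power_divide field_simps flip: powr_realpow)
  also have "\<dots> = ennreal (\<Sum>k. unit_ball_vol N * 2 powr \<beta> * R powr (N - \<beta>) * q^k)"
    using q by (intro suminf_ennreal2) (auto intro!: summable_mult summable_geometric)
  also have "(\<Sum>k. unit_ball_vol N * 2 powr \<beta> * R powr (N - \<beta>) * q^k)
      = ball_kernel_bound DIM('a) \<beta> * R powr (DIM('a) - \<beta>)"
    using q by (simp add: suminf_mult suminf_geometric ball_kernel_bound_def N_def q_def field_simps)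
  finally show ?thesis .
qed

lemma borel_measurable_ball_powr:
  fixes x :: "'a::euclidean_space"
  shows "(\<lambda>y. indicator (ball x R) y * norm (x - y) powr (-\<beta>)) \<in> borel_measurable lborel"
  by (intro borel_measurable_times borel_measurable_indicator) (auto intro: measurable)

lemma set_integrable_ball_powr:
  fixes x :: "'a::euclidean_space" and \<beta> R :: real
  assumes "0 \<le> \<beta>" "\<beta> < DIM('a)" "0 < R"
  shows "set_integrable lborel (ball x R) (\<lambda>y. norm (x - y) powr (-\<beta>))"
  unfolding set_integrable_def
  using borel_measurable_ball_powr nn_integral_ball_powr_le[OF assms, of x]
  by (intro integrableI_nonneg) (auto simp: top.not_eq_extremum intro: le_less_trans)

lemma set_integral_ball_powr_le:
  fixes x :: "'a::euclidean_space" and \<beta> R :: real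
  assumes "0 \<le> \<beta>" "\<beta> < DIM('a)" "0 < R"
  shows "(LINT y:ball x R|lborel. norm (x - y) powr (-\<beta>))
      \<le> ball_kernel_bound DIM('a) \<beta> * R powr (DIM('a) - \<beta>)"
proof -
  have "(LINT y:ball x R|lborel. norm (x - y) powr (-\<beta>)) =
      enn2real (\<integral>\<^sup>+ y. ennreal (indicator (ball x R) y * norm (x - y) powr (-\<beta>)) \<partial>lborel)"
    unfolding set_lebesgue_integral_def
    using borel_measurable_ball_powr by (subst integral_eq_nn_integral) auto
  also have "\<dots> \<le> ball_kernel_bound DIM('a) \<beta> * R powr (DIM('a) - \<beta>)"
    using nn_integral_ball_powr_le[OF assms, of x] ball_kernel_bound_pos[OF assms(2)]
    by (intro enn2real_leI) auto
  finally show ?thesis .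
qed

lemma abs_set_integral_le_integral:
  fixes f g :: "'a \<Rightarrow> real"
  assumes g: "integrable M g" "\<And>y. 0 \<le> g y" and f: "set_borel_measurable M A f"
    and le: "\<And>y. y \<in> A \<Longrightarrow> \<bar>f y\<bar> \<le> g y"
  shows "set_integrable M A f" and "\<bar>LINT y:A|M. f y\<bar> \<le> integral\<^sup>L M g"
proof -
  have bound: "\<bar>indicator A y *\<^sub>R f y\<bar> \<le> g y" for y
    using le[of y] g(2)[of y] by (cases "y \<in> A") simp_all
  have integrable: "integrable M (\<lambda>y. indicator A y *\<^sub>R f y)"
    using g(1) f unfolding set_borel_measurable_def
  proof (rule Bochner_Integration.integrable_bound)
    show "AE y in M. norm (indicator A y *\<^sub>R f y) \<le> norm (g y)"
      using bound g(2) by (simp add: order_trans[OF bound])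
  qed
  then show "set_integrable M A f"
    unfolding set_integrable_def .
  have "\<bar>LINT y:A|M. f y\<bar> \<le> (LINT y|M. \<bar>indicator A y *\<^sub>R f y\<bar>)"
    unfolding set_lebesgue_integral_def by (rule integral_abs_bound)
  also have "\<dots> \<le> integral\<^sup>L M g"
    using integral_mono[OF integrable_abs[OF integrable] g(1)] bound by blast
  finally show "\<bar>LINT y:A|M. f y\<bar> \<le> integral\<^sup>L M g" .
qed

section \<open>Hoelder functions\<close>

lemma holder_norm_bound:
  fixes u :: "'a::euclidean_space \<Rightarrow> real"
  assumes u: "u \<in> holder_space \<alpha> \<Omega>" and norm_u: "holder_norm \<alpha> \<Omega> u \<le> M"
    and "y \<in> closure \<Omega>" "z \<in> closure \<Omega>" "0 < \<alpha>"
  shows "\<bar>u y - u z\<bar> \<le> M * dist y z powr \<alpha>"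
proof (cases "y = z")
  case True
  then show ?thesis using assms by simp
next
  case False
  define P where "P = {(y, z). y \<in> closure \<Omega> \<and> z \<in> closure \<Omega> \<and> y \<noteq> z}"
  define q where "q p = \<bar>u (fst p) - u (snd p)\<bar> / dist (fst p) (snd p) powr \<alpha>" for p
  obtain C where C: "\<forall>a\<in>closure \<Omega>. \<forall>b\<in>closure \<Omega>. \<bar>u a - u b\<bar> \<le> C * dist a b powr \<alpha>"
    using u unfolding holder_space_def by auto
  obtain B where B: "\<forall>a\<in>closure \<Omega>. \<bar>u a\<bar> \<le> B"
    using u unfolding holder_space_def bounded_iff by auto
  have "0 \<le> \<bar>u y\<bar>" by simp
  also have "\<bar>u y\<bar> \<le> (SUP a\<in>closure \<Omega>. \<bar>u a\<bar>)"
    using B assms(3) by (intro cSUP_upper bdd_aboveI2) auto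
  finally have sup_nonneg: "0 \<le> (SUP a\<in>closure \<Omega>. \<bar>u a\<bar>)" .
  have "q p \<le> C" if "p \<in> P" for p
    using that C by (auto simp: P_def q_def divide_le_eq)
  then have "q (y, z) \<le> (SUP p\<in>P. q p)"
    using assms(3,4) False by (intro cSUP_upper bdd_aboveI2) (auto simp: P_def)
  also have "\<dots> = holder_norm \<alpha> \<Omega> u - (SUP a\<in>closure \<Omega>. \<bar>u a\<bar>)"
    unfolding holder_norm_def P_def q_def by simp
  also have "\<dots> \<le> M"
    using norm_u sup_nonneg by simp
  finally show ?thesis
    using False by (simp add: q_def divide_le_eq mult.commute)
qed

lemma holder_continuous_on:
  fixes u :: "'a::metric_space \<Rightarrow> real"
  assumes holder: "\<And>y z. y \<in> S \<Longrightarrow> z \<in> S \<Longrightarrow> \<bar>u y - u z\<bar> \<le> M * dist y z powr \<alpha>"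
    and "0 < \<alpha>"
  shows "continuous_on S u"
  unfolding continuous_on_def
proof
  fix x assume "x \<in> S"
  have "((\<lambda>y. dist y x) \<longlongrightarrow> 0) (at x within S)"
    using tendsto_dist[OF tendsto_ident_at[of x S] tendsto_const[of x]] by simp
  then have "((\<lambda>y. M * dist y x powr \<alpha>) \<longlongrightarrow> 0) (at x within S)"
    using \<open>0 < \<alpha>\<close> by (intro tendsto_mult_right_zero tendsto_zero_powrI[of _ _ "\<lambda>_. \<alpha>" \<alpha>]) auto
  moreover have "\<forall>\<^sub>F y in at x within S. norm (u y - u x) \<le> M * dist y x powr \<alpha>"
    using holder \<open>x \<in> S\<close> by (auto simp: eventually_at_filter)
  ultimately have "((\<lambda>y. u y - u x) \<longlongrightarrow> 0) (at x within S)"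
    by (rule Lim_null_comparison[rotated])
  then show "(u \<longlongrightarrow> u x) (at x within S)"
    by (rule LIM_zero_cancel)
qed

section \<open>The kernel of the regional fractional Laplacian\<close>

definition frac_kernel :: "('a::euclidean_space \<Rightarrow> real) \<Rightarrow> 'a \<Rightarrow> real \<Rightarrow> 'a \<Rightarrow> real" where
  "frac_kernel u x s y = (u x - u y) / norm (x - y) powr (real DIM('a) + 2 * s)"

lemma set_borel_measurable_frac_kernel:
  assumes "open \<Omega>" and u: "continuous_on \<Omega> u"
  shows "set_borel_measurable lborel \<Omega> (frac_kernel u x s)"
proof -
  have "continuous_on (\<Omega> - {x}) (frac_kernel u x s)"
    unfolding frac_kernel_def by (intro continuous_intros continuous_on_subset[OF u]) auto
  then have "set_borel_measurable borel (\<Omega> - {x}) (frac_kernel u x s)"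
    using \<open>open \<Omega>\<close> by (intro set_measurable_continuous_on) auto
  moreover have "(\<lambda>y. indicator (\<Omega> - {x}) y *\<^sub>R frac_kernel u x s y)
      = (\<lambda>y. indicator \<Omega> y *\<^sub>R frac_kernel u x s y)"
    by (auto simp: indicator_def frac_kernel_def)
  ultimately show ?thesis
    by (simp add: set_borel_measurable_def)
qed

lemma abs_frac_kernel_le:
  fixes u :: "'a::euclidean_space \<Rightarrow> real"
  assumes "\<bar>u x - u y\<bar> \<le> M * dist x y powr \<alpha>"
  shows "\<bar>frac_kernel u x s y\<bar> \<le> M * norm (x - y) powr (\<alpha> - DIM('a) - 2 * s)"
proof (cases "y = x")
  case False
  then have r: "0 < norm (x - y)" by simp
  have "\<bar>frac_kernel u x s y\<bar> = \<bar>u x - u y\<bar> / norm (x - y) powr (DIM('a) + 2 * s)"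
    by (simp add: frac_kernel_def abs_divide)
  also have "\<dots> \<le> M * norm (x - y) powr \<alpha> / norm (x - y) powr (DIM('a) + 2 * s)"
    using assms r by (intro divide_right_mono) (auto simp: dist_norm)
  also have "\<dots> = M * norm (x - y) powr (\<alpha> - DIM('a) - 2 * s)"
    using r by (simp add: powr_diff diff_diff_eq)
  finally show ?thesis .
qed (simp add: frac_kernel_def)

definition powr_deviation :: "real \<Rightarrow> real \<Rightarrow> real \<Rightarrow> real" where
  "powr_deviation \<rho> D s = max (\<rho> powr (- 2 * s) - 1) (1 - D powr (- 2 * s))"

lemma abs_powr_minus_one_le_deviation:
  fixes r :: real
  assumes "0 < \<rho>" "\<rho> \<le> r" "r \<le> D" "0 \<le> s"
  shows "\<bar>r powr (- 2 * s) - 1\<bar> \<le> powr_deviation \<rho> D s"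
proof -
  have "r powr (- 2 * s) \<le> \<rho> powr (- 2 * s)" "D powr (- 2 * s) \<le> r powr (- 2 * s)"
    using assms by (auto intro!: powr_mono2')
  then show ?thesis
    unfolding powr_deviation_def by linarith
qed

lemma powr_deviation_nonneg:
  assumes "0 < \<rho>" "\<rho> \<le> 1" "0 \<le> s"
  shows "0 \<le> powr_deviation \<rho> D s"
  using powr_mono2'[of "- 2 * s" \<rho> 1] assms unfolding powr_deviation_def by simp

lemma powr_mult_abs_powr_minus_one_le:
  fixes r N :: real
  assumes "0 < r" "r \<le> 1" "0 \<le> s" "4 * s \<le> \<alpha>"
  shows "r powr (\<alpha> - N) * \<bar>r powr (- 2 * s) - 1\<bar> \<le> r powr (\<alpha> / 2 - N)"
proof -
  have "1 \<le> r powr (- 2 * s)"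
    using powr_mono2'[of "- 2 * s" r 1] assms by simp
  then have "r powr (\<alpha> - N) * \<bar>r powr (- 2 * s) - 1\<bar> \<le> r powr (\<alpha> - N) * r powr (- 2 * s)"
    by (intro mult_left_mono) auto
  also have "\<dots> = r powr (\<alpha> - N - 2 * s)"
    by (simp add: powr_add[symmetric])
  also have "\<dots> \<le> r powr (\<alpha> / 2 - N)"
    using assms by (intro powr_mono') auto
  finally show ?thesis .
qed

lemma abs_frac_kernel_diff_le:
  fixes u :: "'a::euclidean_space \<Rightarrow> real" and s \<rho> D :: real
  assumes holder: "\<bar>u x - u y\<bar> \<le> M * dist x y powr \<alpha>" and "0 \<le> M"
    and "0 < s" "4 * s \<le> \<alpha>" "0 < \<rho>" "\<rho> \<le> 1" "dist x y < D"
  shows "\<bar>frac_kernel u x s y - frac_kernel u x 0 y\<bar> \<le> M * (indicator (ball x \<rho>) y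
      * norm (x - y) powr (\<alpha> / 2 - DIM('a)) + powr_deviation \<rho> D s * norm (x - y) powr (\<alpha> - DIM('a)))"
proof (cases "y = x")
  case True
  then show ?thesis
    using powr_deviation_nonneg[of \<rho> s D] assms by (simp add: frac_kernel_def)
next
  case False
  define N where "N = real DIM('a)"
  define r where "r = norm (x - y)"
  define \<eta> where "\<eta> = powr_deviation \<rho> D s"
  have r: "0 < r" "r < D"
    using False assms(7) by (auto simp: r_def dist_norm)
  have "frac_kernel u x s y - frac_kernel u x 0 y = (u x - u y) * r powr (- N) * (r powr (- 2 * s) - 1)"
    using r by (simp add: frac_kernel_def r_def N_def powr_minus_divide powr_add field_simps)
  then have "\<bar>frac_kernel u x s y - frac_kernel u x 0 y\<bar>
      = \<bar>u x - u y\<bar> * r powr (- N) * \<bar>r powr (- 2 * s) - 1\<bar>"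
    by (simp add: abs_mult)
  also have "\<dots> \<le> M * r powr \<alpha> * r powr (- N) * \<bar>r powr (- 2 * s) - 1\<bar>"
    using holder by (intro mult_right_mono) (auto simp: r_def dist_norm)
  also have "\<dots> = M * (r powr (\<alpha> - N) * \<bar>r powr (- 2 * s) - 1\<bar>)"
    by (simp add: powr_add[symmetric])
  also have "r powr (\<alpha> - N) * \<bar>r powr (- 2 * s) - 1\<bar>
      \<le> indicator (ball x \<rho>) y * r powr (\<alpha> / 2 - N) + \<eta> * r powr (\<alpha> - N)"
  proof (cases "r < \<rho>")
    case True
    then have "r powr (\<alpha> - N) * \<bar>r powr (- 2 * s) - 1\<bar> \<le> r powr (\<alpha> / 2 - N)"
      using r assms by (intro powr_mult_abs_powr_minus_one_le) auto
    moreover have "0 \<le> \<eta> * r powr (\<alpha> - N)"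
      unfolding \<eta>_def using assms by (simp add: powr_deviation_nonneg)
    ultimately show ?thesis
      using True by (simp add: r_def dist_norm)
  next
    case False
    then have "\<bar>r powr (- 2 * s) - 1\<bar> \<le> \<eta>"
      unfolding \<eta>_def using r assms by (intro abs_powr_minus_one_le_deviation) auto
    then have "r powr (\<alpha> - N) * \<bar>r powr (- 2 * s) - 1\<bar> \<le> \<eta> * r powr (\<alpha> - N)"
      by (subst mult.commute) (rule mult_right_mono, auto)
    then show ?thesis
      using False by (simp add: r_def dist_norm)
  qed
  finally show ?thesis
    using assms(2) by (simp add: r_def N_def \<eta>_def mult_left_mono)
qed

text \<open>Bounds \<open>\<integral>\<^sub>\<Omega> |x - y|\<^bsup>\<alpha>-N\<^esup> ||x - y|\<^bsup>-2s\<^esup> - 1| dy\<close> when \<open>\<Omega> \<subseteq> B(x, D)\<close>: crudely on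
  \<open>B(x, \<rho>)\<close>, through \<^const>\<open>powr_deviation\<close> outside.\<close>

definition kernel_gap :: "nat \<Rightarrow> real \<Rightarrow> real \<Rightarrow> real \<Rightarrow> real \<Rightarrow> real" where
  "kernel_gap N \<alpha> D \<rho> s = ball_kernel_bound N (N - \<alpha> / 2) * \<rho> powr (\<alpha> / 2)
     + powr_deviation \<rho> D s * (ball_kernel_bound N (N - \<alpha>) * D powr \<alpha>)"

definition c_Ns_factor :: "nat \<Rightarrow> real \<Rightarrow> real" where
  "c_Ns_factor N s = 4 powr s * Gamma ((real N + 2 * s) / 2) / (pi powr (real N / 2) * Gamma (1 - s))"

lemma c_Ns_eq: "c_Ns N s = s * c_Ns_factor N s"
  unfolding c_Ns_def c_Ns_factor_def by simp

definition expansion_error :: "nat \<Rightarrow> real \<Rightarrow> real \<Rightarrow> real \<Rightarrow> real \<Rightarrow> real" where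
  "expansion_error N \<alpha> D \<rho> s =
     \<bar>c_Ns_factor N s - c_N N\<bar> * (ball_kernel_bound N (N - \<alpha>) * D powr \<alpha> + kernel_gap N \<alpha> D \<rho> s)
     + c_N N * kernel_gap N \<alpha> D \<rho> s"

context
  fixes \<Omega> :: "'a::euclidean_space set" and u :: "'a \<Rightarrow> real" and x :: 'a and \<alpha> M :: real
  assumes open_domain: "open \<Omega>" and continuous_u: "continuous_on \<Omega> u"
    and holder_at: "\<And>y. y \<in> \<Omega> \<Longrightarrow> \<bar>u x - u y\<bar> \<le> M * dist x y powr \<alpha>"
    and M_nonneg: "0 \<le> M"
begin

lemma set_integral_frac_kernel_ball:
  fixes s R :: real
  assumes "0 \<le> s" "2 * s < \<alpha>" "\<alpha> \<le> 1" "0 < R" "A \<in> sets lborel" "A \<subseteq> \<Omega> \<inter> ball x R"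
  shows "set_integrable lborel A (frac_kernel u x s)"
    and "\<bar>LINT y:A|lborel. frac_kernel u x s y\<bar>
      \<le> M * (ball_kernel_bound DIM('a) (DIM('a) + 2 * s - \<alpha>) * R powr (\<alpha> - 2 * s))"
proof -
  define \<beta> where "\<beta> = DIM('a) + 2 * s - \<alpha>"
  have \<beta>: "0 \<le> \<beta>" "\<beta> < DIM('a)"
    unfolding \<beta>_def using assms DIM_positive[where 'a='a] by linarith+
  define g where "g y = M * (indicator (ball x R) y * norm (x - y) powr (-\<beta>))" for y
  have g_integrable: "integrable lborel g"
    using set_integrable_ball_powr[OF \<beta> \<open>0 < R\<close>, of x]
    unfolding g_def set_integrable_def by simp
  have g_nonneg: "0 \<le> g y" for y
    unfolding g_def using M_nonneg by simp
  have measurable: "set_borel_measurable lborel A (frac_kernel u x s)"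
    using set_borel_measurable_subset[OF set_borel_measurable_frac_kernel[OF open_domain continuous_u]
        assms(5)] assms(6) by blast
  have dominated: "\<bar>frac_kernel u x s y\<bar> \<le> g y" if "y \<in> A" for y
  proof -
    have "y \<in> \<Omega>" "y \<in> ball x R"
      using that assms(6) by auto
    then show ?thesis
      using abs_frac_kernel_le[OF holder_at[OF \<open>y \<in> \<Omega>\<close>], of s]
      by (simp add: g_def \<beta>_def algebra_simps)
  qed
  note bound = abs_set_integral_le_integral[OF g_integrable g_nonneg measurable dominated]
  show "set_integrable lborel A (frac_kernel u x s)"
    by (rule bound(1))
  have "integral\<^sup>L lborel g = M * (LINT y:ball x R|lborel. norm (x - y) powr (-\<beta>))"
    unfolding g_def set_lebesgue_integral_def by simp
  also have "\<dots> \<le> M * (ball_kernel_bound DIM('a) \<beta> * R powr (DIM('a) - \<beta>))"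
    using set_integral_ball_powr_le[OF \<beta> \<open>0 < R\<close>, of x] M_nonneg by (rule mult_left_mono)
  finally show "\<bar>LINT y:A|lborel. frac_kernel u x s y\<bar>
      \<le> M * (ball_kernel_bound DIM('a) (DIM('a) + 2 * s - \<alpha>) * R powr (\<alpha> - 2 * s))"
    using bound(2) by (simp add: \<beta>_def)
qed

lemma frac_kernel_principal_value:
  fixes s D :: real
  assumes "0 \<le> s" "2 * s < \<alpha>" "\<alpha> \<le> 1" "0 < D" "\<Omega> \<subseteq> ball x D"
  shows "Lim (at_right 0) (\<lambda>\<epsilon>. LINT y:(\<Omega> - ball x \<epsilon>)|lborel. frac_kernel u x s y)
      = (LINT y:\<Omega>|lborel. frac_kernel u x s y)"
proof -
  define K where "K = ball_kernel_bound DIM('a) (DIM('a) + 2 * s - \<alpha>)"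
  note on_ball = set_integral_frac_kernel_ball[OF assms(1-3)]
  have \<Omega>: "\<Omega> \<in> sets lborel"
    using open_domain by simp
  have "norm ((LINT y:(\<Omega> - ball x \<epsilon>)|lborel. frac_kernel u x s y) - (LINT y:\<Omega>|lborel. frac_kernel u x s y))
      \<le> M * (K * \<epsilon> powr (\<alpha> - 2 * s))" if "0 < \<epsilon>" for \<epsilon>
  proof -
    have "set_integrable lborel (\<Omega> - ball x \<epsilon>) (frac_kernel u x s)"
      using \<Omega> assms(4,5) by (intro on_ball(1)[of D]) auto
    moreover have "set_integrable lborel (\<Omega> \<inter> ball x \<epsilon>) (frac_kernel u x s)"
      using \<Omega> \<open>0 < \<epsilon>\<close> by (intro on_ball(1)[of \<epsilon>]) auto
    ultimately have "(LINT y:(\<Omega> - ball x \<epsilon>) \<union> (\<Omega> \<inter> ball x \<epsilon>)|lborel. frac_kernel u x s y)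
        = (LINT y:\<Omega> - ball x \<epsilon>|lborel. frac_kernel u x s y)
          + (LINT y:\<Omega> \<inter> ball x \<epsilon>|lborel. frac_kernel u x s y)"
      by (intro set_integral_Un) auto
    then have "(LINT y:\<Omega>|lborel. frac_kernel u x s y)
        = (LINT y:\<Omega> - ball x \<epsilon>|lborel. frac_kernel u x s y)
          + (LINT y:\<Omega> \<inter> ball x \<epsilon>|lborel. frac_kernel u x s y)"
      by (simp only: Un_Diff_Int)
    then show ?thesis
      using on_ball(2)[of \<epsilon> "\<Omega> \<inter> ball x \<epsilon>"] \<Omega> that by (simp add: K_def)
  qed
  then have "\<forall>\<^sub>F \<epsilon> in at_right 0. norm ((LINT y:(\<Omega> - ball x \<epsilon>)|lborel. frac_kernel u x s y)
      - (LINT y:\<Omega>|lborel. frac_kernel u x s y)) \<le> M * (K * \<epsilon> powr (\<alpha> - 2 * s))"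
    by (rule eventually_mono[OF eventually_at_right_less[of 0]])
  moreover have "((\<lambda>\<epsilon>. M * (K * \<epsilon> powr (\<alpha> - 2 * s))) \<longlongrightarrow> 0) (at_right 0)"
  proof (intro tendsto_mult_right_zero tendsto_zero_powrI[OF tendsto_ident_at tendsto_const])
    show "\<forall>\<^sub>F \<epsilon> in at_right 0. 0 \<le> (\<epsilon>::real)"
      by (rule eventually_mono[OF eventually_at_right_less]) simp
  qed (use assms(2) in simp)
  ultimately have "((\<lambda>\<epsilon>. (LINT y:(\<Omega> - ball x \<epsilon>)|lborel. frac_kernel u x s y)
      - (LINT y:\<Omega>|lborel. frac_kernel u x s y)) \<longlongrightarrow> 0) (at_right 0)"
    by (rule Lim_null_comparison)
  then have "((\<lambda>\<epsilon>. LINT y:(\<Omega> - ball x \<epsilon>)|lborel. frac_kernel u x s y)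
      \<longlongrightarrow> (LINT y:\<Omega>|lborel. frac_kernel u x s y)) (at_right 0)"
    by (rule LIM_zero_cancel)
  then show ?thesis
    by (intro tendsto_Lim) auto
qed

lemma frac_kernel_integral_gap:
  fixes s \<rho> D :: real
  assumes "0 < s" "4 * s \<le> \<alpha>" "\<alpha> < 1" "0 < \<rho>" "\<rho> \<le> 1" "1 \<le> D" "\<Omega> \<subseteq> ball x D"
  shows "\<bar>(LINT y:\<Omega>|lborel. frac_kernel u x s y) - (LINT y:\<Omega>|lborel. frac_kernel u x 0 y)\<bar>
      \<le> M * kernel_gap DIM('a) \<alpha> D \<rho> s"
proof -
  define N where "N = real DIM('a)"
  define \<eta> where "\<eta> = powr_deviation \<rho> D s"
  have N: "\<alpha> < N"
    unfolding N_def using DIM_positive[where 'a='a] assms(3) by linarith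
  have \<eta>: "0 \<le> \<eta>"
    unfolding \<eta>_def using assms by (intro powr_deviation_nonneg) auto
  have \<Omega>: "\<Omega> \<in> sets lborel"
    using open_domain by simp
  have integrable: "set_integrable lborel \<Omega> (frac_kernel u x s)" "set_integrable lborel \<Omega> (frac_kernel u x 0)"
    using assms \<Omega>
    by (auto intro!: set_integral_frac_kernel_ball(1)[of _ D])
  have near: "set_integrable lborel (ball x \<rho>) (\<lambda>y. norm (x - y) powr (- (N - \<alpha> / 2)))"
    using assms N unfolding N_def by (intro set_integrable_ball_powr) linarith+
  have far: "set_integrable lborel (ball x D) (\<lambda>y. norm (x - y) powr (- (N - \<alpha>)))"
    using assms N unfolding N_def by (intro set_integrable_ball_powr) linarith+
  define g where "g y = M * (indicator (ball x \<rho>) y * norm (x - y) powr (- (N - \<alpha> / 2))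
      + \<eta> * (indicator (ball x D) y * norm (x - y) powr (- (N - \<alpha>))))" for y
  have g_integrable: "integrable lborel g"
    using near far unfolding g_def set_integrable_def by simp
  have g_nonneg: "0 \<le> g y" for y
    unfolding g_def using M_nonneg \<eta> by simp
  have measurable: "set_borel_measurable lborel \<Omega> (\<lambda>y. frac_kernel u x s y - frac_kernel u x 0 y)"
    using set_borel_measurable_frac_kernel[OF open_domain continuous_u, of x s]
      set_borel_measurable_frac_kernel[OF open_domain continuous_u, of x 0]
    unfolding set_borel_measurable_def scaleR_diff_right by (rule borel_measurable_diff)
  have dominated: "\<bar>frac_kernel u x s y - frac_kernel u x 0 y\<bar> \<le> g y" if "y \<in> \<Omega>" for y
    using abs_frac_kernel_diff_le[OF holder_at[OF that] M_nonneg assms(1,2,4,5), of D] that assms(7)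
    by (auto simp: g_def \<eta>_def N_def)
  have "(LINT y:\<Omega>|lborel. frac_kernel u x s y) - (LINT y:\<Omega>|lborel. frac_kernel u x 0 y)
      = (LINT y:\<Omega>|lborel. frac_kernel u x s y - frac_kernel u x 0 y)"
    using integrable by (rule set_integral_diff(2)[symmetric])
  also have "\<bar>\<dots>\<bar> \<le> integral\<^sup>L lborel g"
    by (rule abs_set_integral_le_integral(2)[OF g_integrable g_nonneg measurable dominated])
  also have "integral\<^sup>L lborel g = M * ((LINT y:ball x \<rho>|lborel. norm (x - y) powr (- (N - \<alpha> / 2)))
      + \<eta> * (LINT y:ball x D|lborel. norm (x - y) powr (- (N - \<alpha>))))"
    using near far unfolding g_def set_lebesgue_integral_def set_integrable_def by simp
  also have "\<dots> \<le> M * (ball_kernel_bound DIM('a) (N - \<alpha> / 2) * \<rho> powr (\<alpha> / 2)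
      + \<eta> * (ball_kernel_bound DIM('a) (N - \<alpha>) * D powr \<alpha>))"
  proof -
    have "(LINT y:ball x \<rho>|lborel. norm (x - y) powr (- (N - \<alpha> / 2)))
        \<le> ball_kernel_bound DIM('a) (N - \<alpha> / 2) * \<rho> powr (\<alpha> / 2)"
      using set_integral_ball_powr_le[of "N - \<alpha> / 2" \<rho> x] assms N by (simp add: N_def)
    moreover have "(LINT y:ball x D|lborel. norm (x - y) powr (- (N - \<alpha>)))
        \<le> ball_kernel_bound DIM('a) (N - \<alpha>) * D powr \<alpha>"
      using set_integral_ball_powr_le[of "N - \<alpha>" D x] assms N by (simp add: N_def)
    ultimately show ?thesis
      using M_nonneg \<eta> by (intro mult_left_mono add_mono) auto
  qed
  also have "\<dots> = M * kernel_gap DIM('a) \<alpha> D \<rho> s"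
    by (simp add: kernel_gap_def N_def \<eta>_def)
  finally show ?thesis .
qed

lemma abs_regional_frac_lap_minus_L_Delta_le:
  fixes s \<rho> D :: real
  assumes "0 < s" "4 * s \<le> \<alpha>" "\<alpha> < 1" "0 < \<rho>" "\<rho> \<le> 1" "1 \<le> D" "\<Omega> \<subseteq> ball x D"
  shows "\<bar>regional_frac_lap s \<Omega> u x - s * L_Delta \<Omega> u x\<bar> \<le> s * (M * expansion_error DIM('a) \<alpha> D \<rho> s)"
proof -
  define I where "I t = (LINT y:\<Omega>|lborel. frac_kernel u x t y)" for t
  define a where "a = c_Ns_factor DIM('a) s"
  define c where "c = c_N DIM('a)"
  define B where "B = ball_kernel_bound DIM('a) (DIM('a) - \<alpha>) * D powr \<alpha>"
  define G where "G = kernel_gap DIM('a) \<alpha> D \<rho> s"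
  have "regional_frac_lap s \<Omega> u x = s * a * I s"
    using frac_kernel_principal_value[of s D] assms
    unfolding regional_frac_lap_def frac_kernel_def I_def a_def c_Ns_eq by simp
  moreover have "L_Delta \<Omega> u x = c * I 0"
    unfolding L_Delta_def I_def frac_kernel_def c_def by simp
  ultimately have "regional_frac_lap s \<Omega> u x - s * L_Delta \<Omega> u x = s * ((a - c) * I s + c * (I s - I 0))"
    by (simp add: algebra_simps)
  then have "\<bar>regional_frac_lap s \<Omega> u x - s * L_Delta \<Omega> u x\<bar> = s * \<bar>(a - c) * I s + c * (I s - I 0)\<bar>"
    using \<open>0 < s\<close> by (simp add: abs_mult)
  also have "\<dots> \<le> s * (\<bar>a - c\<bar> * \<bar>I s\<bar> + c * \<bar>I s - I 0\<bar>)"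
  proof -
    have "0 \<le> c"
      unfolding c_def c_N_def by simp
    then show ?thesis
      using \<open>0 < s\<close> by (intro mult_left_mono) (auto simp: abs_mult intro: order_trans[OF abs_triangle_ineq])
  qed
  also have "\<dots> \<le> s * (\<bar>a - c\<bar> * (M * B + M * G) + c * (M * G))"
  proof -
    have gap: "\<bar>I s - I 0\<bar> \<le> M * G"
      unfolding I_def G_def using frac_kernel_integral_gap[OF assms] .
    moreover have "\<bar>I 0\<bar> \<le> M * B"
      using set_integral_frac_kernel_ball(2)[of 0 D \<Omega>] open_domain assms
      unfolding I_def B_def by simp
    ultimately have "\<bar>I s\<bar> \<le> M * B + M * G"
      by linarith
    moreover have "0 \<le> c"
      unfolding c_def c_N_def by simp
    ultimately show ?thesis
      using gap \<open>0 < s\<close> by (intro mult_left_mono add_mono) auto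
  qed
  also have "\<dots> = s * (M * expansion_error DIM('a) \<alpha> D \<rho> s)"
    by (simp add: expansion_error_def a_def c_def B_def G_def algebra_simps)
  finally show ?thesis .
qed

end

section \<open>The limit \<open>s \<rightarrow> 0\<close>\<close>

lemma c_Ns_factor_tendsto:
  assumes "1 \<le> N"
  shows "(c_Ns_factor N \<longlongrightarrow> c_N N) (at_right 0)"
proof -
  have "(real N + 2 * 0) / 2 \<notin> \<int>\<^sub>\<le>\<^sub>0" "1 - 0 \<notin> (\<int>\<^sub>\<le>\<^sub>0 :: real set)"
    using assms by (auto dest!: nonpos_Ints_nonpos)
  then have "isCont (c_Ns_factor N) 0"
    unfolding c_Ns_factor_def by (intro continuous_intros) auto
  then have "(c_Ns_factor N \<longlongrightarrow> c_Ns_factor N 0) (at_right 0)"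
    by (simp add: isCont_def filterlim_at_split)
  then show ?thesis
    by (simp add: c_Ns_factor_def c_N_def)
qed

lemma kernel_gap_tendsto_0:
  assumes "0 < \<alpha>" "0 < D"
  shows "((\<lambda>s. kernel_gap N \<alpha> D s s) \<longlongrightarrow> 0) (at_right 0)"
proof -
  have small: "((\<lambda>s. s powr (\<alpha> / 2)) \<longlongrightarrow> 0) (at_right 0)"
  proof (rule tendsto_zero_powrI[OF tendsto_ident_at tendsto_const])
    show "\<forall>\<^sub>F s in at_right 0. 0 \<le> (s::real)"
      by (rule eventually_mono[OF eventually_at_right_less]) simp
  qed (use assms in simp)
  have inner: "((\<lambda>s::real. s powr (- 2 * s)) \<longlongrightarrow> 1) (at_right 0)"
    by real_asymp
  have outer: "((\<lambda>s. D powr (- 2 * s)) \<longlongrightarrow> 1) (at_right 0)"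
    using tendsto_powr[OF tendsto_const[of D] tendsto_mult[OF tendsto_const[of "- 2"] tendsto_ident_at],
        of 0 "{0<..}"] assms(2) by simp
  define K K' where "K = ball_kernel_bound N (N - \<alpha> / 2)" and "K' = ball_kernel_bound N (N - \<alpha>) * D powr \<alpha>"
  have "((\<lambda>s. K * s powr (\<alpha> / 2) + max (s powr (- 2 * s) - 1) (1 - D powr (- 2 * s)) * K')
      \<longlongrightarrow> K * 0 + max (1 - 1) (1 - 1) * K') (at_right 0)"
    by (intro tendsto_add tendsto_mult tendsto_max tendsto_diff tendsto_const small inner outer)
  then show ?thesis
    unfolding kernel_gap_def powr_deviation_def K_def K'_def by simp
qed

lemma expansion_error_tendsto_0:
  assumes "1 \<le> N" "0 < \<alpha>" "0 < D"
  shows "((\<lambda>s. expansion_error N \<alpha> D s s) \<longlongrightarrow> 0) (at_right 0)"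
  using c_Ns_factor_tendsto[OF assms(1)] kernel_gap_tendsto_0[OF assms(2,3), of N]
  unfolding expansion_error_def by (auto intro!: tendsto_eq_intros)

lemma abs_regional_frac_lap_minus_L_Delta_holder_le:
  fixes \<Omega> :: "'a::euclidean_space set" and \<alpha> M s :: real
  assumes "bounded \<Omega>" "open \<Omega>" "0 < \<alpha>" "\<alpha> < 1" "0 \<le> M"
    and u: "u \<in> holder_space \<alpha> \<Omega>" "holder_norm \<alpha> \<Omega> u \<le> M"
    and "x \<in> \<Omega>" "0 < s" "4 * s \<le> \<alpha>"
  shows "\<bar>regional_frac_lap s \<Omega> u x - s * L_Delta \<Omega> u x\<bar>
      \<le> s * (M * expansion_error DIM('a) \<alpha> (diameter \<Omega> + 1) s s)"
proof -
  have holder: "\<bar>u y - u z\<bar> \<le> M * dist y z powr \<alpha>" if "y \<in> \<Omega>" "z \<in> \<Omega>" for y z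
    using holder_norm_bound[OF u] closure_subset that assms(3) by blast
  then have "continuous_on \<Omega> u"
    using assms(3) by (rule holder_continuous_on)
  moreover have "\<Omega> \<subseteq> ball x (diameter \<Omega> + 1)"
    using diameter_bounded_bound[OF \<open>bounded \<Omega>\<close> \<open>x \<in> \<Omega>\<close>] by force
  ultimately show ?thesis
    using holder[OF \<open>x \<in> \<Omega>\<close>] assms diameter_ge_0[OF \<open>bounded \<Omega>\<close>]
    by (intro abs_regional_frac_lap_minus_L_Delta_le) auto
qed

theorem corollary1p2:
  fixes \<Omega> :: "'a::euclidean_space set" and \<alpha> M :: real
  assumes "lipschitz_set \<Omega>" and "0 < \<alpha>" and "\<alpha> < 1"
  shows "\<forall>\<epsilon>>0. \<exists>\<delta>>0. \<forall>s. 0 < s \<and> s < \<delta> \<longrightarrow>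
           (\<forall>u\<in>holder_space \<alpha> \<Omega>. holder_norm \<alpha> \<Omega> u \<le> M \<longrightarrow>
              (\<forall>x\<in>\<Omega>. \<bar>regional_frac_lap s \<Omega> u x - s * L_Delta \<Omega> u x\<bar> \<le> \<epsilon> * s))"
proof (intro allI impI)
  fix \<epsilon> :: real assume "0 < \<epsilon>"
  define E where "E s = \<bar>M\<bar> * expansion_error DIM('a) \<alpha> (diameter \<Omega> + 1) s s" for s
  have "bounded \<Omega>" "open \<Omega>"
    using assms(1) by (auto simp: lipschitz_set_def)
  then have "(E \<longlongrightarrow> 0) (at_right 0)"
    unfolding E_def using diameter_ge_0[of \<Omega>] assms(2)
    by (intro tendsto_mult_right_zero expansion_error_tendsto_0) (auto simp: Suc_le_eq)
  then have "\<forall>\<^sub>F s in at_right 0. E s < \<epsilon>"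
    using \<open>0 < \<epsilon>\<close> by (rule order_tendstoD(2))
  then obtain \<delta> where "0 < \<delta>" and \<delta>: "\<And>s. 0 < s \<Longrightarrow> s < \<delta> \<Longrightarrow> E s < \<epsilon>"
    unfolding eventually_at_right_field by blast
  have "\<bar>regional_frac_lap s \<Omega> u x - s * L_Delta \<Omega> u x\<bar> \<le> \<epsilon> * s"
    if "0 < s" "s < min \<delta> (\<alpha> / 4)" "u \<in> holder_space \<alpha> \<Omega>" "holder_norm \<alpha> \<Omega> u \<le> M" "x \<in> \<Omega>"
    for s u x
  proof -
    have "\<bar>regional_frac_lap s \<Omega> u x - s * L_Delta \<Omega> u x\<bar> \<le> s * E s"
      unfolding E_def using that \<open>bounded \<Omega>\<close> \<open>open \<Omega>\<close> assms(2,3)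
      by (intro abs_regional_frac_lap_minus_L_Delta_holder_le) auto
    also have "\<dots> \<le> \<epsilon> * s"
      using \<delta>[of s] that by (simp add: mult.commute)
    finally show ?thesis .
  qed
  then show "\<exists>\<delta>>0. \<forall>s. 0 < s \<and> s < \<delta> \<longrightarrow>
           (\<forall>u\<in>holder_space \<alpha> \<Omega>. holder_norm \<alpha> \<Omega> u \<le> M \<longrightarrow>
              (\<forall>x\<in>\<Omega>. \<bar>regional_frac_lap s \<Omega> u x - s * L_Delta \<Omega> u x\<bar> \<le> \<epsilon> * s))"
    using \<open>0 < \<delta>\<close> assms(2) by (intro exI[of _ "min \<delta> (\<alpha> / 4)"]) auto
qed

end
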